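(* Let $n\geq1$ and $1\leq i<j\leq n$. In $M_n$, the left-lcm of $\rho_i$ and $\rho_j$ exists and equals $(\rho_1\rho_n)^{n-j+1}\rho_i=\rho_{n-j+i+1}(\rho_1\rho_n)^{n-j}\rho_j$.
   Context: $M_n$ denotes the monoid with generators $\rho_1,\dots,\rho_n$ and relations $\rho_1\rho_n\rho_i=\rho_{i+1}\rho_n$ for $1\leq i\leq n-1$. A left-lcm of $a,b$ is a common left-multiple of $a$ and $b$ (an element $xa=yb$) that right-divides every common left-multiple of $a$ and $b$. *)

theory Defs
  imports Main
begin

text \<open>Elements of the free monoid on generators rho_1..rho_n are words (lists of
indices in {1..n}); the monoid M_n is the quotient of the free monoid by the
congruence generated by the defining relations.\<close>

definition words :: "nat \<Rightarrow> nat list set" where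
  "words n = {w. set w \<subseteq> {1..n}}"

definition Mrels :: "nat \<Rightarrow> (nat list \<times> nat list) set" where
  "Mrels n = {([1, n, i], [i + 1, n]) | i. 1 \<le> i \<and> i \<le> n - 1}"

inductive Meq :: "nat \<Rightarrow> nat list \<Rightarrow> nat list \<Rightarrow> bool" for n where
  Meq_refl: "w \<in> words n \<Longrightarrow> Meq n w w"
| Meq_sym: "Meq n u v \<Longrightarrow> Meq n v u"
| Meq_trans: "Meq n u v \<Longrightarrow> Meq n v w \<Longrightarrow> Meq n u w"
| Meq_step: "(l, r) \<in> Mrels n \<Longrightarrow> x \<in> words n \<Longrightarrow> y \<in> words n \<Longrightarrow>
             Meq n (x @ l @ y) (x @ r @ y)"

definition right_divides :: "nat \<Rightarrow> nat list \<Rightarrow> nat list \<Rightarrow> bool" where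
  "right_divides n a c \<longleftrightarrow> (\<exists>x \<in> words n. Meq n c (x @ a))"

definition common_left_multiple :: "nat \<Rightarrow> nat list \<Rightarrow> nat list \<Rightarrow> nat list \<Rightarrow> bool" where
  "common_left_multiple n a b c \<longleftrightarrow> c \<in> words n \<and> right_divides n a c \<and> right_divides n b c"

definition is_left_lcm :: "nat \<Rightarrow> nat list \<Rightarrow> nat list \<Rightarrow> nat list \<Rightarrow> bool" where
  "is_left_lcm n a b c \<longleftrightarrow> common_left_multiple n a b c \<and>
     (\<forall>d. common_left_multiple n a b d \<longrightarrow> right_divides n c d)"

definition wpow :: "nat list \<Rightarrow> nat \<Rightarrow> nat list" where
  "wpow w k = concat (replicate k w)"

end

theory Submission
  imports Defs
begin

text \<open>Every letter has positive weight and the defining relations preserve the total weight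
  (the sum of the letters), so one may argue by induction on the weight. Write C(a,b) for
  the complement of a and b, chosen so that C(a,b) a = C(b,a) b in M_n: with x = rho_1 rho_n
  it is x^(n-b+1) for a < b and rho_(n-a+b+1) x^(n-a) for a > b. The invariant is that
  u s = v t in M_n implies u = v when s = t, and u = w C(s,t), v = w C(t,s) for some w when
  s <> t. It holds for a single application of a relation, and it is preserved under
  composition because the complements satisfy Dehornoy's cube condition, which is checked by
  normalising both sides with the identity x^m rho_k = rho_(k+m) rho_n^m. The invariant says
  precisely that C(a,b) a is the left-lcm of a and b.\<close>

lemma words_append [simp]: "a @ b \<in> words n \<longleftrightarrow> a \<in> words n \<and> b \<in> words n"
  by (auto simp: words_def)

lemma words_Cons [simp]: "x # b \<in> words n \<longleftrightarrow> x \<in> {1..n} \<and> b \<in> words n"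
  by (auto simp: words_def)

lemma words_Nil [simp]: "[] \<in> words n"
  by (simp add: words_def)

lemma wpow_0 [simp]: "wpow w 0 = []"
  by (simp add: wpow_def)

lemma wpow_Suc: "wpow w (Suc m) = w @ wpow w m"
  by (simp add: wpow_def)

lemma wpow_Suc_right: "wpow w (Suc m) = wpow w m @ w"
  by (simp add: wpow_def replicate_append_same[symmetric] del: replicate_append_same)

lemma wpow_add: "wpow w (a + b) = wpow w a @ wpow w b"
  by (simp add: wpow_def replicate_add)

lemma wpow_in_words: "1 \<le> n \<Longrightarrow> wpow [1, n] m \<in> words n"
  by (induction m) (auto simp: wpow_Suc)

declare Meq.Meq_trans [trans]

lemma Meq_in_words: "Meq n u v \<Longrightarrow> u \<in> words n \<and> v \<in> words n"
  by (induction rule: Meq.induct) (auto simp: Mrels_def)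

lemma Meq_sum_list: "Meq n u v \<Longrightarrow> sum_list u = sum_list v"
  by (induction rule: Meq.induct) (auto simp: Mrels_def)

lemma Meq_append_right: "Meq n u v \<Longrightarrow> c \<in> words n \<Longrightarrow> Meq n (u @ c) (v @ c)"
proof (induction rule: Meq.induct)
  case (Meq_step l r x y)
  then have "Meq n (x @ l @ (y @ c)) (x @ r @ (y @ c))"
    by (intro Meq.Meq_step) auto
  then show ?case by simp
qed (auto intro: Meq.intros)

lemma Meq_append_left: "Meq n u v \<Longrightarrow> c \<in> words n \<Longrightarrow> Meq n (c @ u) (c @ v)"
proof (induction rule: Meq.induct)
  case (Meq_step l r x y)
  then have "Meq n ((c @ x) @ l @ y) ((c @ x) @ r @ y)"
    by (intro Meq.Meq_step) auto
  then show ?case by simp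
qed (auto intro: Meq.intros)

lemma Meq_in_context:
  "Meq n a b \<Longrightarrow> p \<in> words n \<Longrightarrow> q \<in> words n \<Longrightarrow> Meq n (p @ a @ q) (p @ b @ q)"
  by (simp add: Meq_append_left Meq_append_right)

lemma Meq_wpow_letter:
  "1 \<le> k \<Longrightarrow> k + m \<le> n \<Longrightarrow> Meq n (wpow [1, n] m @ [k]) ((k + m) # replicate m n)"
proof (induction m arbitrary: k)
  case 0
  then show ?case by (auto intro: Meq.Meq_refl)
next
  case (Suc m)
  have "([1, n, k], [k + 1, n]) \<in> Mrels n"
    using Suc.prems by (auto simp: Mrels_def)
  then have "Meq n (wpow [1, n] m @ [1, n, k] @ []) (wpow [1, n] m @ [k + 1, n] @ [])"
    using Suc.prems wpow_in_words by (intro Meq.Meq_step) auto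
  then have "Meq n (wpow [1, n] (Suc m) @ [k]) ((wpow [1, n] m @ [k + 1]) @ [n])"
    by (simp add: wpow_Suc_right)
  also have "Meq n \<dots> (((k + 1 + m) # replicate m n) @ [n])"
    using Suc by (intro Meq_append_right Suc.IH) auto
  finally show ?case
    by (simp add: replicate_append_same)
qed

lemma Meq_wpow_letter_in_context:
  assumes "1 \<le> k" "k + m \<le> n" "p \<in> words n" "q \<in> words n"
  shows "Meq n (p @ wpow [1, n] m @ k # q) (p @ (k + m) # replicate m n @ q)"
  using Meq_in_context[OF Meq_wpow_letter assms(3,4)] assms(1,2) by simp

subsection \<open>Complements\<close>

definition complement :: "nat \<Rightarrow> nat \<Rightarrow> nat \<Rightarrow> nat list" where
  "complement n a b =
     (if a < b then wpow [1, n] (n - b + 1) else (n - a + b + 1) # wpow [1, n] (n - a))"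

lemma complement_less: "a < b \<Longrightarrow> complement n a b = wpow [1, n] (n - b + 1)"
  by (simp add: complement_def)

lemma complement_greater: "b < a \<Longrightarrow> complement n a b = (n - a + b + 1) # wpow [1, n] (n - a)"
  by (simp add: complement_def)

lemma Meq_complement_commute:
  assumes "a \<in> {1..n}" "b \<in> {1..n}" "a \<noteq> b"
  shows "Meq n (complement n a b @ [a]) (complement n b a @ [b])"
proof -
  have less: "Meq n (complement n a b @ [a]) (complement n b a @ [b])"
    if "1 \<le> a" "a < b" "b \<le> n" for a b
  proof -
    have "Meq n (complement n a b @ [a]) ((a + (n - b + 1)) # replicate (n - b + 1) n)"
      using that Meq_wpow_letter[of a "n - b + 1" n] by (simp add: complement_less)
    also have "\<dots> = [n - b + a + 1] @ (b + (n - b)) # replicate (n - b) n @ []"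
      using that by simp
    also have "Meq n \<dots> ([n - b + a + 1] @ wpow [1, n] (n - b) @ [b])"
      by (rule Meq.Meq_sym, rule Meq_wpow_letter_in_context) (use that in auto)
    finally show ?thesis
      using that by (simp add: complement_greater)
  qed
  show ?thesis
  proof (cases "a < b")
    case True
    then show ?thesis using assms less by simp
  next
    case False
    show ?thesis by (rule Meq.Meq_sym) (use assms False less[of b a] in simp)
  qed
qed

subsection \<open>Factorisation through complements\<close>

definition factors_through_complement :: "nat \<Rightarrow> nat list \<Rightarrow> nat \<Rightarrow> nat list \<Rightarrow> nat \<Rightarrow> bool"
  where "factors_through_complement n u s v t \<longleftrightarrow>
    (s = t \<longrightarrow> Meq n u v) \<and>
    (s \<noteq> t \<longrightarrow> (\<exists>w. Meq n u (w @ complement n s t) \<and> Meq n v (w @ complement n t s)))"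

definition factors_through_complement_below :: "nat \<Rightarrow> nat \<Rightarrow> bool" where
  "factors_through_complement_below n W \<longleftrightarrow>
    (\<forall>u s v t. sum_list (u @ [s]) < W \<longrightarrow> Meq n (u @ [s]) (v @ [t]) \<longrightarrow>
       factors_through_complement n u s v t)"

lemma factors_through_complement_sym:
  "factors_through_complement n u s v t \<Longrightarrow> factors_through_complement n v t u s"
  unfolding factors_through_complement_def by (metis Meq.Meq_sym)

lemma right_cancel_below:
  assumes "factors_through_complement_below n W"
  shows "Meq n (a @ c) (b @ c) \<Longrightarrow> sum_list (a @ c) < W \<Longrightarrow> Meq n a b"
proof (induction c rule: rev_induct)
  case (snoc q c)
  then have "factors_through_complement n (a @ c) q (b @ c) q"
    using assms unfolding factors_through_complement_below_def by simp
  then show ?case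
    using snoc by (simp add: factors_through_complement_def)
qed simp

text \<open>The cube condition, in the three possible positions of r relative to s < t. The
  hypotheses say that u s = z r = v t with both equalities factoring through complements.\<close>

lemma cube_condition_lower:
  assumes below: "factors_through_complement_below n W" and weight: "sum_list z < W"
    and order: "1 \<le> r" "r < s" "s < t" "t \<le> n"
    and u: "Meq n u (w @ complement n s r)" and z: "Meq n z (w @ complement n r s)"
    and z': "Meq n z (w' @ complement n r t)" and v: "Meq n v (w' @ complement n t r)"
  shows "\<exists>w''. Meq n u (w'' @ complement n s t) \<and> Meq n v (w'' @ complement n t s)"
proof -
  obtain d where t: "t = s + Suc d" using less_imp_Suc_add[OF order(3)] by auto
  obtain e where n: "n = t + e" using le_Suc_ex[OF order(4)] by blast
  let ?x = "wpow [1, n]"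
  have rs: "complement n r s = ?x (Suc d) @ ?x (Suc e)"
    and rt: "complement n r t = ?x (Suc e)"
    and sr: "complement n s r = (d + e + r + 2) # ?x d @ ?x (Suc e)"
    and st: "complement n s t = ?x (Suc e)"
    and tr: "complement n t r = (e + r + 1) # ?x e"
    and ts: "complement n t s = (e + s + 1) # ?x e"
    using order t n by (simp_all add: complement_less complement_greater wpow_add[symmetric])
  have words: "w \<in> words n" "?x e \<in> words n" "d + e + r + 2 \<in> {1..n}" "e + r + 1 \<in> {1..n}"
    using Meq_in_words[OF z] wpow_in_words order t n by auto
  have "Meq n ((w @ ?x (Suc d)) @ ?x (Suc e)) (w' @ ?x (Suc e))"
    using Meq.Meq_trans[OF Meq.Meq_sym[OF z] z'] rs rt by simp
  moreover have "sum_list ((w @ ?x (Suc d)) @ ?x (Suc e)) < W"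
    using Meq_sum_list[OF z] weight rs by simp
  ultimately have w': "Meq n (w @ ?x (Suc d)) w'"
    by (rule right_cancel_below[OF below])
  let ?w'' = "w @ [d + e + r + 2] @ ?x d"
  have "Meq n v (w' @ (e + r + 1) # ?x e)"
    using v tr by simp
  also have "Meq n \<dots> (w @ ?x (Suc d) @ (e + r + 1) # ?x e)"
    using Meq_append_right[OF Meq.Meq_sym[OF w'], of "(e + r + 1) # ?x e"] words by simp
  also have "Meq n \<dots> (w @ (e + r + 1 + Suc d) # replicate (Suc d) n @ ?x e)"
    by (rule Meq_wpow_letter_in_context) (use words order t n in auto)
  also have "\<dots> = (w @ [d + e + r + 2]) @ (e + s + 1 + d) # replicate d n @ ?x e"
    using t n by simp
  also have "Meq n \<dots> ((w @ [d + e + r + 2]) @ ?x d @ (e + s + 1) # ?x e)"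
    by (rule Meq.Meq_sym, rule Meq_wpow_letter_in_context) (use words order t n in auto)
  finally have "Meq n v (?w'' @ complement n t s)"
    using ts by simp
  moreover have "Meq n u (?w'' @ complement n s t)"
    using u sr st by simp
  ultimately show ?thesis by blast
qed

lemma cube_condition_middle:
  assumes below: "factors_through_complement_below n W" and weight: "sum_list z < W"
    and order: "1 \<le> s" "s < r" "r < t" "t \<le> n"
    and u: "Meq n u (w @ complement n s r)" and z: "Meq n z (w @ complement n r s)"
    and z': "Meq n z (w' @ complement n r t)" and v: "Meq n v (w' @ complement n t r)"
  shows "\<exists>w''. Meq n u (w'' @ complement n s t) \<and> Meq n v (w'' @ complement n t s)"
proof -
  obtain f where r: "r = s + Suc f" using less_imp_Suc_add[OF order(2)] by auto
  obtain d where t: "t = r + Suc d" using less_imp_Suc_add[OF order(3)] by auto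
  obtain e where n: "n = t + e" using le_Suc_ex[OF order(4)] by blast
  let ?x = "wpow [1, n]"
  let ?k = "e + d + s + 2"
  have rs: "complement n r s = ?k # ?x d @ ?x (Suc e)"
    and rt: "complement n r t = ?x (Suc e)"
    and sr: "complement n s r = ?x (Suc d) @ ?x (Suc e)"
    and st: "complement n s t = ?x (Suc e)"
    and tr: "complement n t r = (e + r + 1) # ?x e"
    and ts: "complement n t s = (e + s + 1) # ?x e"
    using order r t n by (simp_all add: complement_less complement_greater wpow_add[symmetric])
  have words: "w \<in> words n" "?x e \<in> words n" "e + r + 1 \<in> {1..n}"
    using Meq_in_words[OF z] wpow_in_words order t n by auto
  have "Meq n ((w @ ?k # ?x d) @ ?x (Suc e)) (w' @ ?x (Suc e))"
    using Meq.Meq_trans[OF Meq.Meq_sym[OF z] z'] rs rt by simp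
  moreover have "sum_list ((w @ ?k # ?x d) @ ?x (Suc e)) < W"
    using Meq_sum_list[OF z] weight rs by simp
  ultimately have w': "Meq n (w @ ?k # ?x d) w'"
    by (rule right_cancel_below[OF below])
  let ?w'' = "w @ ?x (Suc d)"
  have "Meq n v (w' @ (e + r + 1) # ?x e)"
    using v tr by simp
  also have "Meq n \<dots> ((w @ [?k]) @ ?x d @ (e + r + 1) # ?x e)"
    using Meq_append_right[OF Meq.Meq_sym[OF w'], of "(e + r + 1) # ?x e"] words by simp
  also have "Meq n \<dots> ((w @ [?k]) @ (e + r + 1 + d) # replicate d n @ ?x e)"
    by (rule Meq_wpow_letter_in_context) (use words order t n in auto)
  also have "\<dots> = w @ (e + s + 1 + Suc d) # replicate (Suc d) n @ ?x e"
    using r t n by simp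
  also have "Meq n \<dots> (w @ ?x (Suc d) @ (e + s + 1) # ?x e)"
    by (rule Meq.Meq_sym, rule Meq_wpow_letter_in_context) (use words order r t n in auto)
  finally have "Meq n v (?w'' @ complement n t s)"
    using ts by simp
  moreover have "Meq n u (?w'' @ complement n s t)"
    using u sr st by simp
  ultimately show ?thesis by blast
qed

text \<open>Unlike the other two cases, cancellation here only yields
  w rho_(n-r+s+1) = w' rho_(n-r+t+1), an equality of smaller weight to which the induction
  hypothesis applies once more.\<close>

lemma cube_condition_upper:
  assumes below: "factors_through_complement_below n W" and weight: "sum_list z < W"
    and order: "1 \<le> s" "s < t" "t < r" "r \<le> n"
    and u: "Meq n u (w @ complement n s r)" and z: "Meq n z (w @ complement n r s)"
    and z': "Meq n z (w' @ complement n r t)" and v: "Meq n v (w' @ complement n t r)"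
  shows "\<exists>w''. Meq n u (w'' @ complement n s t) \<and> Meq n v (w'' @ complement n t s)"
proof -
  obtain d where t: "t = s + Suc d" using less_imp_Suc_add[OF order(2)] by auto
  obtain f where r: "r = t + Suc f" using less_imp_Suc_add[OF order(3)] by auto
  obtain e where n: "n = r + e" using le_Suc_ex[OF order(4)] by blast
  let ?x = "wpow [1, n]"
  have rs: "complement n r s = (e + s + 1) # ?x e"
    and rt: "complement n r t = (e + t + 1) # ?x e"
    and sr: "complement n s r = ?x (Suc e)"
    and tr: "complement n t r = ?x (Suc e)"
    and st: "complement n s t = ?x (Suc f) @ ?x (Suc e)"
    and ts: "complement n t s = (f + e + s + 2) # ?x f @ ?x (Suc e)"
    and inner_st: "complement n (e + s + 1) (e + t + 1) = ?x (Suc f)"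
    and inner_ts: "complement n (e + t + 1) (e + s + 1) = (f + e + s + 2) # ?x f"
    using order t r n by (simp_all add: complement_less complement_greater wpow_add[symmetric])
  have x: "?x (Suc e) \<in> words n"
    using wpow_in_words order by simp
  have "Meq n ((w @ [e + s + 1]) @ ?x e) ((w' @ [e + t + 1]) @ ?x e)"
    using Meq.Meq_trans[OF Meq.Meq_sym[OF z] z'] rs rt by simp
  moreover have weight_ws: "sum_list ((w @ [e + s + 1]) @ ?x e) < W"
    using Meq_sum_list[OF z] weight rs by simp
  ultimately have "Meq n (w @ [e + s + 1]) (w' @ [e + t + 1])"
    by (rule right_cancel_below[OF below])
  moreover have "sum_list (w @ [e + s + 1]) < W"
    using weight_ws by simp
  ultimately have "factors_through_complement n w (e + s + 1) w' (e + t + 1)"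
    using below unfolding factors_through_complement_below_def by blast
  then obtain w'' where w: "Meq n w (w'' @ ?x (Suc f))"
    and w': "Meq n w' (w'' @ (f + e + s + 2) # ?x f)"
    using inner_st inner_ts t by (auto simp: factors_through_complement_def)
  have "Meq n u (w'' @ complement n s t)"
    using Meq.Meq_trans[OF u[unfolded sr] Meq_append_right[OF w x]] st by simp
  moreover have "Meq n v (w'' @ complement n t s)"
    using Meq.Meq_trans[OF v[unfolded tr] Meq_append_right[OF w' x]] ts by simp
  ultimately show ?thesis by blast
qed

lemma cube_condition_ordered:
  assumes below: "factors_through_complement_below n W" and weight: "sum_list z < W"
    and letters: "1 \<le> r" "1 \<le> s" "r \<le> n" "t \<le> n" "r \<noteq> s" "r \<noteq> t" and "s < t"
    and u: "Meq n u (w @ complement n s r)" and z: "Meq n z (w @ complement n r s)"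
    and z': "Meq n z (w' @ complement n r t)" and v: "Meq n v (w' @ complement n t r)"
  shows "\<exists>w''. Meq n u (w'' @ complement n s t) \<and> Meq n v (w'' @ complement n t s)"
proof -
  consider "r < s" | "s < r" "r < t" | "t < r"
    using letters \<open>s < t\<close> by linarith
  then show ?thesis
  proof cases
    case 1
    then show ?thesis
      using cube_condition_lower[OF below weight _ 1 \<open>s < t\<close> _ u z z' v] letters by blast
  next
    case 2
    then show ?thesis
      using cube_condition_middle[OF below weight _ 2 _ u z z' v] letters by blast
  next
    case 3
    then show ?thesis
      using cube_condition_upper[OF below weight _ \<open>s < t\<close> 3 _ u z z' v] letters by blast
  qed
qed

lemma cube_condition:
  assumes below: "factors_through_complement_below n W" and weight: "sum_list z < W"
    and letters: "r \<in> {1..n}" "s \<in> {1..n}" "t \<in> {1..n}" "r \<noteq> s" "r \<noteq> t" "s \<noteq> t"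
    and u: "Meq n u (w @ complement n s r)" and z: "Meq n z (w @ complement n r s)"
    and z': "Meq n z (w' @ complement n r t)" and v: "Meq n v (w' @ complement n t r)"
  shows "\<exists>w''. Meq n u (w'' @ complement n s t) \<and> Meq n v (w'' @ complement n t s)"
proof (cases "s < t")
  case True
  then show ?thesis
    using cube_condition_ordered[OF below weight _ _ _ _ _ _ True u z z' v] letters by simp
next
  case False
  then have "t < s"
    using letters by simp
  then show ?thesis
    using cube_condition_ordered[OF below weight _ _ _ _ _ _ \<open>t < s\<close> v z' z u] letters by auto
qed

lemma factors_through_complement_trans_same:
  "factors_through_complement n u s z s \<Longrightarrow> factors_through_complement n z s v t \<Longrightarrow>
   factors_through_complement n u s v t"
  unfolding factors_through_complement_def by (metis Meq.Meq_trans)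

lemma factors_through_complement_trans:
  assumes below: "factors_through_complement_below n W" and weight: "sum_list z < W"
    and letters: "r \<in> {1..n}" "s \<in> {1..n}" "t \<in> {1..n}"
    and uz: "factors_through_complement n u s z r" and zv: "factors_through_complement n z r v t"
  shows "factors_through_complement n u s v t"
proof -
  consider "s = r" | "r = t" | "s = t" "s \<noteq> r" | "s \<noteq> r" "r \<noteq> t" "s \<noteq> t"
    by blast
  then show ?thesis
  proof cases
    case 1
    then show ?thesis using uz zv factors_through_complement_trans_same by blast
  next
    case 2
    then have "factors_through_complement n v t z t" "factors_through_complement n z t u s"
      using factors_through_complement_sym[OF zv] factors_through_complement_sym[OF uz] by simp_all
    then show ?thesis
      using factors_through_complement_trans_same factors_through_complement_sym by blast
  next
    case 3
    then obtain w w' where u: "Meq n u (w @ complement n s r)" and z: "Meq n z (w @ complement n r s)"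
      and z': "Meq n z (w' @ complement n r s)" and v: "Meq n v (w' @ complement n s r)"
      using uz zv unfolding factors_through_complement_def by auto
    have "Meq n w w'"
      using right_cancel_below[OF below Meq.Meq_trans[OF Meq.Meq_sym[OF z] z']]
        Meq_sum_list[OF z] weight by simp
    have "Meq n u (w @ complement n s r)"
      by (rule u)
    also have "Meq n \<dots> (w' @ complement n s r)"
      using Meq_append_right[OF \<open>Meq n w w'\<close>] Meq_in_words[OF u] by simp
    also have "Meq n \<dots> v"
      by (rule Meq.Meq_sym[OF v])
    finally show ?thesis
      using 3 by (simp add: factors_through_complement_def)
  next
    case 4
    obtain w where "Meq n u (w @ complement n s r)" "Meq n z (w @ complement n r s)"
      using uz 4 unfolding factors_through_complement_def by auto
    moreover obtain w' where "Meq n z (w' @ complement n r t)" "Meq n v (w' @ complement n t r)"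
      using zv 4 unfolding factors_through_complement_def by auto
    ultimately show ?thesis
      using cube_condition[OF below weight letters] 4
      unfolding factors_through_complement_def by blast
  qed
qed

lemma factors_through_complement_step:
  assumes "(l, r) \<in> Mrels n" "x \<in> words n" "y \<in> words n"
    and "x @ l @ y = u @ [s]" "x @ r @ y = v @ [t]"
  shows "factors_through_complement n u s v t"
proof (cases y rule: rev_exhaust)
  case Nil
  obtain i where "l = [1, n, i]" "r = [i + 1, n]" "1 \<le> i" "i \<le> n - 1"
    using assms(1) unfolding Mrels_def by blast
  moreover have "complement n i n = [1, n]" "complement n n i = [i + 1]"
    using \<open>1 \<le> i\<close> \<open>i \<le> n - 1\<close> by (auto simp: complement_def wpow_def)
  ultimately show ?thesis
    using assms Nil
    by (auto simp: factors_through_complement_def intro!: exI[of _ x] Meq.Meq_refl)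
next
  case (snoc y' q)
  then have "Meq n u v" "s = t"
    using assms Meq.Meq_step[OF assms(1,2), of y'] by auto
  then show ?thesis by (simp add: factors_through_complement_def)
qed

lemma factors_through_complement_of_weight:
  assumes below: "factors_through_complement_below n W"
  shows "Meq n a b \<Longrightarrow> sum_list a = W \<Longrightarrow> a = u @ [s] \<Longrightarrow> b = v @ [t] \<Longrightarrow>
    factors_through_complement n u s v t"
proof (induction arbitrary: u s v t rule: Meq.induct)
  case (Meq_refl w)
  then show ?case by (auto simp: factors_through_complement_def intro: Meq.Meq_refl)
next
  case (Meq_sym a b)
  have "sum_list a = W"
    using Meq_sum_list[OF Meq_sym.hyps] Meq_sym.prems(1) by simp
  then show ?case
    using factors_through_complement_sym[OF Meq_sym.IH[OF _ Meq_sym.prems(3,2)]] by blast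
next
  case (Meq_trans a b c)
  have b: "b \<in> words n" "sum_list b = W"
    using Meq_in_words[OF Meq_trans.hyps(1)] Meq_sum_list[OF Meq_trans.hyps(1)] Meq_trans.prems(1)
    by auto
  have letters: "s \<in> {1..n}" "t \<in> {1..n}"
    using Meq_in_words[OF Meq_trans.hyps(1)] Meq_in_words[OF Meq_trans.hyps(2)] Meq_trans.prems
    by auto
  then have "b \<noteq> []"
    using b Meq_trans.prems(1,2) by auto
  then obtain z r where z: "b = z @ [r]"
    by (cases b rule: rev_exhaust) auto
  then have "r \<in> {1..n}" "sum_list z < W"
    using b by auto
  moreover have "factors_through_complement n u s z r" "factors_through_complement n z r v t"
    using Meq_trans.IH Meq_trans.prems z b(2) by auto
  ultimately show ?case
    using factors_through_complement_trans[OF below] letters by blast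
next
  case (Meq_step l r x y)
  then show ?case by (intro factors_through_complement_step)
qed

lemma factors_through_complement_below_all: "factors_through_complement_below n W"
proof (induction W)
  case 0
  then show ?case by (simp add: factors_through_complement_below_def)
next
  case (Suc W)
  show ?case
    unfolding factors_through_complement_below_def
  proof (intro allI impI)
    fix u s v t
    assume "sum_list (u @ [s]) < Suc W" and eq: "Meq n (u @ [s]) (v @ [t])"
    then consider "sum_list (u @ [s]) < W" | "sum_list (u @ [s]) = W"
      by linarith
    then show "factors_through_complement n u s v t"
    proof cases
      case 1
      then show ?thesis using Suc eq unfolding factors_through_complement_below_def by blast
    next
      case 2
      then show ?thesis using factors_through_complement_of_weight[OF Suc eq] by blast
    qed
  qed
qed

lemma factors_through_complement:
  "Meq n (u @ [s]) (v @ [t]) \<Longrightarrow> factors_through_complement n u s v t"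
  using factors_through_complement_below_all[of n "Suc (sum_list (u @ [s]))"]
  unfolding factors_through_complement_below_def by blast

subsection \<open>Left-lcms of generators\<close>

lemma left_lcm_complement:
  assumes "a \<in> {1..n}" "b \<in> {1..n}" "a \<noteq> b"
  shows "is_left_lcm n [a] [b] (complement n a b @ [a])"
proof -
  have complement_words: "complement n a b \<in> words n" "complement n b a \<in> words n"
    using assms wpow_in_words by (auto simp: complement_def)
  have "right_divides n [a] (complement n a b @ [a])"
    unfolding right_divides_def
    by (rule bexI[of _ "complement n a b"])
      (use assms complement_words in \<open>auto intro: Meq.Meq_refl\<close>)
  moreover have "right_divides n [b] (complement n a b @ [a])"
    unfolding right_divides_def
    by (rule bexI[of _ "complement n b a"]) (use Meq_complement_commute[OF assms] complement_words in auto)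
  ultimately have "common_left_multiple n [a] [b] (complement n a b @ [a])"
    using assms complement_words by (simp add: common_left_multiple_def)
  moreover have "right_divides n (complement n a b @ [a]) d"
    if multiple: "common_left_multiple n [a] [b] d" for d
  proof -
    obtain x y where d: "Meq n d (x @ [a])" and "Meq n d (y @ [b])"
      using multiple unfolding common_left_multiple_def right_divides_def by blast
    then have "factors_through_complement n x a y b"
      by (intro factors_through_complement Meq.Meq_trans[OF Meq.Meq_sym[OF d]])
    then obtain w where x: "Meq n x (w @ complement n a b)"
      using assms unfolding factors_through_complement_def by auto
    have "Meq n d ((w @ complement n a b) @ [a])"
      using Meq.Meq_trans[OF d Meq_append_right[OF x]] assms by simp
    then show ?thesis
      using Meq_in_words unfolding right_divides_def by fastforce
  qed
  ultimately show ?thesis by (simp add: is_left_lcm_def)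
qed

theorem corollary4p13:
  fixes n i j :: nat
  assumes "1 \<le> n" and "1 \<le> i" and "i < j" and "j \<le> n"
  shows "is_left_lcm n [i] [j] (wpow [1, n] (n - j + 1) @ [i])
    \<and> Meq n (wpow [1, n] (n - j + 1) @ [i]) ([n - j + i + 1] @ wpow [1, n] (n - j) @ [j])"
proof -
  have letters: "i \<in> {1..n}" "j \<in> {1..n}" "i \<noteq> j"
    using assms by auto
  have "complement n i j = wpow [1, n] (n - j + 1)"
    "complement n j i = [n - j + i + 1] @ wpow [1, n] (n - j)"
    using assms by (simp_all add: complement_less complement_greater)
  then show ?thesis
    using left_lcm_complement[OF letters] Meq_complement_commute[OF letters] by simp
qed

end
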